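(* Let $f:\mathbf U\to\mathbf V$ be a map in the set-up, and let $\mathcal D(f)=\bigcup_{k\ge0}\mathcal D_k(f)$ be the layered decomposition of the set of equivalence classes of critical points described in the context. Then: (P1) there is an integer $M\ge0$ such that $\mathcal D(f)=\bigsqcup_{k=0}^M\mathcal D_k(f)$; (P2) for every $k\ge0$ and $[c_1],[c_2]\in\mathcal D_k(f)$ with $[c_1]\ne[c_2]$, we have $[c_1]\not\to[c_2]$ and $[c_2]\not\to[c_1]$; (P3) if $[c_1]\in\mathcal D_s(f)$ and $[c_2]\in\mathcal D_t(f)$ with $s<t$, then $[c_1]\not\to[c_2]$; (P4) for every $k\ge1$, every $[c]\in\mathcal D_k(f)$ accumulates to some element of $\mathcal D_{k-1}(f)$.
   Context: A map in the set-up: $\mathbf V$ is a disjoint union of finitely many Jordan domains in $\mathbb C$ with pairwise disjoint quasicircle boundaries; $\mathbf U$ is compactly contained in $\mathbf V$ and is a union of finitely many Jordan domains with pairwise disjoint closures; $f:\mathbf U\to\mathbf V$ is a proper holomorphic map all of whose critical points (set $\mathrm{Crit}(f)$) lie in $\mathcal K_f:=\{z\in\mathbf U: f^n(z)\in\mathbf U\ \forall n\ge0\}$, and each component of $\mathbf V$ contains at most one component of $\mathcal K_f$ containing critical points. Puzzle pieces of depth $n$ are components of $f^{-n}(\mathbf V)$; $P_n(x)$ is the depth-$n$ piece containing $x\in\mathcal K_f$. For $x,y\in\mathcal K_f$, $x\to y$ means: for every $n\ge0$ there is $j\ge1$ with $f^j(x)\in P_n(y)$. On $\mathrm{Crit}(f)$: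 $c_1\sim c_2$ iff $c_1=c_2$ or ($c_1\to c_2$ and $c_2\to c_1$); $[c]$ is the class of $c$ and $\mathcal D(f)=\mathrm{Crit}(f)/\sim$. $[c_1]\to[c_2]$ ("$[c_1]$ accumulates to $[c_2]$") iff there exist $c_1'\in[c_1]$, $c_2'\in[c_2]$ with $c_1'\to c_2'$. Partial order: $[c_1]\le[c_2]$ iff $[c_1]=[c_2]$ or $[c_2]\to[c_1]$. $\mathcal D_0(f)$ is the set of $[c]\in\mathcal D(f)$ that do not accumulate to any element of $\mathcal D(f)\setminus\{[c]\}$; inductively, $\mathcal D_{k+1}(f)$ is the set of elements minimal with respect to $\le$ in $\mathcal D(f)\setminus(\mathcal D_0(f)\cup\dots\cup\mathcal D_k(f))$. *)

theory Defs
  imports "HOL-Analysis.Analysis"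
begin

definition qc_Lmax :: "(complex \<Rightarrow> complex) \<Rightarrow> complex \<Rightarrow> real \<Rightarrow> real" where
  "qc_Lmax \<phi> x r = Sup ((\<lambda>z. cmod (\<phi> z - \<phi> x)) ` sphere x r)"

definition qc_lmin :: "(complex \<Rightarrow> complex) \<Rightarrow> complex \<Rightarrow> real \<Rightarrow> real" where
  "qc_lmin \<phi> x r = Inf ((\<lambda>z. cmod (\<phi> z - \<phi> x)) ` sphere x r)"

definition quasiconformal_plane :: "(complex \<Rightarrow> complex) \<Rightarrow> bool" where
  "quasiconformal_plane \<phi> \<longleftrightarrow>
     (\<exists>\<psi>. homeomorphism UNIV UNIV \<phi> \<psi>) \<and>
     (\<exists>H::real. \<forall>x. Limsup (at_right 0) (\<lambda>r. ereal (qc_Lmax \<phi> x r / qc_lmin \<phi> x r)) \<le> ereal H)"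

definition quasicircle :: "complex set \<Rightarrow> bool" where
  "quasicircle \<Gamma> \<longleftrightarrow> (\<exists>\<phi>. quasiconformal_plane \<phi> \<and> \<Gamma> = \<phi> ` sphere 0 1)"

definition jordan_domain :: "complex set \<Rightarrow> bool" where
  "jordan_domain D \<longleftrightarrow> (\<exists>\<gamma>. simple_path \<gamma> \<and> pathfinish \<gamma> = pathstart \<gamma> \<and> D = inside (path_image \<gamma>))"

definition filled_set :: "(complex \<Rightarrow> complex) \<Rightarrow> complex set \<Rightarrow> complex set" where
  "filled_set f U = {z \<in> U. \<forall>n. (f ^^ n) z \<in> U}"

definition crit :: "(complex \<Rightarrow> complex) \<Rightarrow> complex set \<Rightarrow> complex set" where
  "crit f U = {z \<in> U. deriv f z = 0}"

definition setup_map ::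
  "(complex \<Rightarrow> complex) \<Rightarrow> complex set set \<Rightarrow> complex set set \<Rightarrow> bool" where
  "setup_map f \<U> \<V> \<longleftrightarrow>
     finite \<V> \<and> (\<forall>D\<in>\<V>. jordan_domain D \<and> quasicircle (frontier D)) \<and>
     (\<forall>D\<in>\<V>. \<forall>D'\<in>\<V>. D \<noteq> D' \<longrightarrow> D \<inter> D' = {} \<and> frontier D \<inter> frontier D' = {}) \<and>
     finite \<U> \<and> (\<forall>D\<in>\<U>. jordan_domain D) \<and>
     (\<forall>D\<in>\<U>. \<forall>D'\<in>\<U>. D \<noteq> D' \<longrightarrow> closure D \<inter> closure D' = {}) \<and>
     compact (closure (\<Union>\<U>)) \<and> closure (\<Union>\<U>) \<subseteq> \<Union>\<V> \<and>
     f holomorphic_on (\<Union>\<U>) \<and> f ` (\<Union>\<U>) \<subseteq> \<Union>\<V> \<and>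
     (\<forall>K. K \<subseteq> \<Union>\<V> \<and> compact K \<longrightarrow> compact {z \<in> \<Union>\<U>. f z \<in> K}) \<and>
     crit f (\<Union>\<U>) \<subseteq> filled_set f (\<Union>\<U>) \<and>
     (\<forall>D\<in>\<V>. \<forall>c1\<in>crit f (\<Union>\<U>). \<forall>c2\<in>crit f (\<Union>\<U>). c1 \<in> D \<and> c2 \<in> D \<longrightarrow>
        connected_component_set (filled_set f (\<Union>\<U>)) c1 =
        connected_component_set (filled_set f (\<Union>\<U>)) c2)"

text \<open>f^{-n}(V): points where f^n is defined (iterates stay in U) and lands in V.\<close>
definition depth_set :: "(complex \<Rightarrow> complex) \<Rightarrow> complex set \<Rightarrow> complex set \<Rightarrow> nat \<Rightarrow> complex set" where
  "depth_set f U V n = {z. (\<forall>i<n. (f ^^ i) z \<in> U) \<and> (f ^^ n) z \<in> V}"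

definition piece :: "(complex \<Rightarrow> complex) \<Rightarrow> complex set \<Rightarrow> complex set \<Rightarrow> nat \<Rightarrow> complex \<Rightarrow> complex set" where
  "piece f U V n x = connected_component_set (depth_set f U V n) x"

definition acc :: "(complex \<Rightarrow> complex) \<Rightarrow> complex set \<Rightarrow> complex set \<Rightarrow> complex \<Rightarrow> complex \<Rightarrow> bool" where
  "acc f U V x y \<longleftrightarrow> (\<forall>n. \<exists>j\<ge>1. (f ^^ j) x \<in> piece f U V n y)"

definition crit_sim :: "(complex \<Rightarrow> complex) \<Rightarrow> complex set \<Rightarrow> complex set \<Rightarrow> complex \<Rightarrow> complex \<Rightarrow> bool" where
  "crit_sim f U V c1 c2 \<longleftrightarrow> c1 = c2 \<or> (acc f U V c1 c2 \<and> acc f U V c2 c1)"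

definition crit_class :: "(complex \<Rightarrow> complex) \<Rightarrow> complex set \<Rightarrow> complex set \<Rightarrow> complex \<Rightarrow> complex set" where
  "crit_class f U V c = {c' \<in> crit f U. crit_sim f U V c c'}"

definition classes :: "(complex \<Rightarrow> complex) \<Rightarrow> complex set \<Rightarrow> complex set \<Rightarrow> complex set set" where
  "classes f U V = crit_class f U V ` crit f U"

definition cls_acc :: "(complex \<Rightarrow> complex) \<Rightarrow> complex set \<Rightarrow> complex set \<Rightarrow> complex set \<Rightarrow> complex set \<Rightarrow> bool" where
  "cls_acc f U V A B \<longleftrightarrow> (\<exists>a\<in>A. \<exists>b\<in>B. acc f U V a b)"

definition cls_le :: "(complex \<Rightarrow> complex) \<Rightarrow> complex set \<Rightarrow> complex set \<Rightarrow> complex set \<Rightarrow> complex set \<Rightarrow> bool" where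
  "cls_le f U V A B \<longleftrightarrow> A = B \<or> cls_acc f U V B A"

definition layer0 :: "(complex \<Rightarrow> complex) \<Rightarrow> complex set \<Rightarrow> complex set \<Rightarrow> complex set set" where
  "layer0 f U V = {A \<in> classes f U V. \<forall>B \<in> classes f U V - {A}. \<not> cls_acc f U V A B}"

definition minimal_in :: "(complex \<Rightarrow> complex) \<Rightarrow> complex set \<Rightarrow> complex set \<Rightarrow> complex set set \<Rightarrow> complex set set" where
  "minimal_in f U V R = {A \<in> R. \<forall>B \<in> R. cls_le f U V B A \<longrightarrow> B = A}"

primrec layers_upto :: "(complex \<Rightarrow> complex) \<Rightarrow> complex set \<Rightarrow> complex set \<Rightarrow> nat \<Rightarrow> complex set set" where
  "layers_upto f U V 0 = layer0 f U V"
| "layers_upto f U V (Suc k) = layers_upto f U V k \<union> minimal_in f U V (classes f U V - layers_upto f U V k)"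

definition layer :: "(complex \<Rightarrow> complex) \<Rightarrow> complex set \<Rightarrow> complex set \<Rightarrow> nat \<Rightarrow> complex set set" where
  "layer f U V k = (case k of 0 \<Rightarrow> layer0 f U V
                     | Suc j \<Rightarrow> minimal_in f U V (classes f U V - layers_upto f U V j))"

end

theory Submission
  imports Defs "HOL-Complex_Analysis.Complex_Analysis"
begin

text \<open>Layer \<open>k\<close> consists of the minimal classes among those not in earlier layers, so (P2)--(P4)
  follow from the definitions alone. Exhaustion (P1) needs every nonempty set of classes to have
  a minimal element, i.e. accumulation must be a partial order on finitely many classes.
  Transitivity holds because \<open>f\<^sup>i\<close> maps the depth \<open>n + i\<close> piece of a point of the filled set
  into the depth \<open>n\<close> piece of its image, and critical points lie in the filled set. The critical
  set is finite because \<open>f\<close> is proper and is constant on no component of \<open>U\<close>, so critical points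
  cannot accumulate.\<close>

lemma finite_has_minimal_wrt:
  fixes r :: "'a \<Rightarrow> 'a \<Rightarrow> bool"
  assumes "finite R" "R \<noteq> {}"
    and trans: "\<And>a b c. a \<in> R \<Longrightarrow> b \<in> R \<Longrightarrow> c \<in> R \<Longrightarrow> r a b \<Longrightarrow> r b c \<Longrightarrow> r a c"
    and antisym: "\<And>a b. a \<in> R \<Longrightarrow> b \<in> R \<Longrightarrow> r a b \<Longrightarrow> r b a \<Longrightarrow> a = b"
  shows "\<exists>a\<in>R. \<forall>b\<in>R. r a b \<longrightarrow> b = a"
proof -
  define S where "S = {(b, a). a \<in> R \<and> b \<in> R \<and> b \<noteq> a \<and> r a b}"
  have "finite S"
    by (rule finite_subset[of _ "R \<times> R"]) (use \<open>finite R\<close> in \<open>auto simp: S_def\<close>)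
  moreover have "trans S"
    unfolding S_def trans_def using trans antisym by blast
  then have "acyclic S"
    by (simp add: acyclic_def S_def trancl_id)
  ultimately have "wf S"
    by (simp add: wf_iff_acyclic_if_finite)
  obtain a0 where "a0 \<in> R" using \<open>R \<noteq> {}\<close> by blast
  with \<open>wf S\<close> obtain a where "a \<in> R" and "\<And>b. (b, a) \<in> S \<Longrightarrow> b \<notin> R"
    by (rule wfE_min) blast
  then show ?thesis
    unfolding S_def by blast
qed

lemma UN_layer_atMost: "(\<Union>k\<le>M. layer f U V k) = layers_upto f U V M"
  by (induction M) (auto simp: atMost_Suc layer_def)

lemma layer_eq_minimal_in:
  "layer f U V k = minimal_in f U V (classes f U V - (\<Union>j<k. layer f U V j))"
proof (cases k)
  case 0
  then show ?thesis
    by (auto simp: layer_def layer0_def minimal_in_def cls_le_def)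
next
  case (Suc j)
  have "(\<Union>i<Suc j. layer f U V i) = layers_upto f U V j"
    by (simp only: lessThan_Suc_atMost UN_layer_atMost)
  then show ?thesis
    using Suc by (simp add: layer_def)
qed

lemma layer_subset_classes: "layer f U V k \<subseteq> classes f U V"
  by (subst layer_eq_minimal_in) (auto simp: minimal_in_def)

lemma disjoint_family_on_layer: "disjoint_family_on (layer f U V) S"
proof -
  have "layer f U V s \<inter> layer f U V t = {}" if "s < t" for s t
    using that by (subst (2) layer_eq_minimal_in) (auto simp: minimal_in_def)
  then show ?thesis
    unfolding disjoint_family_on_def by (metis inf_commute linorder_neqE_nat)
qed

lemma layer_not_cls_acc:
  assumes "A \<in> layer f U V k" "B \<in> layer f U V k" "A \<noteq> B"
  shows "\<not> cls_acc f U V A B"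
  using assms by (subst (asm) (1 2) layer_eq_minimal_in) (auto simp: minimal_in_def cls_le_def)

lemma layer_not_cls_acc_higher:
  assumes "s < t" "A \<in> layer f U V s" "B \<in> layer f U V t"
  shows "\<not> cls_acc f U V A B"
proof -
  have "B \<notin> layer f U V j" if "j \<le> s" for j
    using disjoint_family_onD[OF disjoint_family_on_layer[of f U V UNIV], of j t] assms that by auto
  then have B: "B \<in> classes f U V - (\<Union>j<s. layer f U V j)" "A \<noteq> B"
    using assms(2,3) layer_subset_classes[of f U V t] by auto
  show ?thesis
    using assms(2) B by (subst (asm) layer_eq_minimal_in) (auto simp: minimal_in_def cls_le_def)
qed

lemma layer_Suc_cls_acc:
  assumes A: "A \<in> layer f U V (Suc k)"
  shows "\<exists>B \<in> layer f U V k. cls_acc f U V A B"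
proof (rule ccontr)
  assume none: "\<not> ?thesis"
  have "A \<in> classes f U V - (\<Union>j<Suc k. layer f U V j)"
    using A by (subst (asm) layer_eq_minimal_in) (auto simp: minimal_in_def)
  then have "A \<in> classes f U V - (\<Union>j<k. layer f U V j)" "A \<notin> layer f U V k"
    by auto
  then obtain B where "B \<in> classes f U V - (\<Union>j<k. layer f U V j)" "B \<noteq> A" "cls_acc f U V A B"
    by (subst (asm) (2) layer_eq_minimal_in) (auto simp: minimal_in_def cls_le_def)
  with none have "B \<in> classes f U V - (\<Union>j<Suc k. layer f U V j)"
    by (auto simp: lessThan_Suc)
  with A \<open>B \<noteq> A\<close> \<open>cls_acc f U V A B\<close> show False
    by (subst (asm) layer_eq_minimal_in) (auto simp: minimal_in_def cls_le_def)
qed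

lemma classes_eq_UN_layer:
  assumes fin: "finite (classes f U V)"
    and trans: "\<And>A B C. A \<in> classes f U V \<Longrightarrow> B \<in> classes f U V \<Longrightarrow> C \<in> classes f U V \<Longrightarrow>
      cls_acc f U V A B \<Longrightarrow> cls_acc f U V B C \<Longrightarrow> cls_acc f U V A C"
    and antisym: "\<And>A B. A \<in> classes f U V \<Longrightarrow> B \<in> classes f U V \<Longrightarrow>
      cls_acc f U V A B \<Longrightarrow> cls_acc f U V B A \<Longrightarrow> A = B"
  shows "classes f U V = (\<Union>k\<le>card (classes f U V). layer f U V k)"
proof -
  let ?L = "\<lambda>k. \<Union>j<k. layer f U V j"
  have L_sub: "?L k \<subseteq> classes f U V" for k
    using layer_subset_classes by blast
  have grow: "?L k = classes f U V \<or> k \<le> card (?L k)" for k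
  proof (induction k)
    case (Suc k)
    show ?case
    proof (cases "?L k = classes f U V")
      case True
      then show ?thesis
        using L_sub[of "Suc k"] by (auto simp: lessThan_Suc)
    next
      case False
      let ?R = "classes f U V - ?L k"
      have "finite ?R" "?R \<noteq> {}"
        using False L_sub[of k] fin by auto
      then have "\<exists>A\<in>?R. \<forall>B\<in>?R. cls_acc f U V A B \<longrightarrow> B = A"
      proof (rule finite_has_minimal_wrt)
        show "cls_acc f U V A C"
          if "A \<in> ?R" "B \<in> ?R" "C \<in> ?R" "cls_acc f U V A B" "cls_acc f U V B C" for A B C
          using that trans[of A B C] by blast
        show "A = B" if "A \<in> ?R" "B \<in> ?R" "cls_acc f U V A B" "cls_acc f U V B A" for A B
          using that antisym[of A B] by blast
      qed
      then obtain A where A: "A \<in> ?R" "\<forall>B\<in>?R. cls_acc f U V A B \<longrightarrow> B = A"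
        by blast
      then have "A \<in> layer f U V k"
        by (subst layer_eq_minimal_in) (auto simp: minimal_in_def cls_le_def)
      then have "insert A (?L k) \<subseteq> ?L (Suc k)"
        by (auto simp: lessThan_Suc)
      then have "card (insert A (?L k)) \<le> card (?L (Suc k))"
        by (rule card_mono[OF finite_subset[OF L_sub fin]])
      moreover have "card (insert A (?L k)) = Suc (card (?L k))"
        using A(1) finite_subset[OF L_sub fin] by simp
      ultimately show ?thesis
        using Suc.IH False by simp
    qed
  qed simp
  let ?M = "card (classes f U V)"
  have "?L ?M = classes f U V"
  proof (cases "?L ?M = classes f U V")
    case False
    with grow[of ?M] card_mono[OF fin L_sub[of ?M]] have "card (?L ?M) = ?M"
      by linarith
    then show ?thesis
      by (rule card_subset_eq[OF fin L_sub])
  qed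
  moreover have "?L ?M \<subseteq> (\<Union>k\<le>?M. layer f U V k)"
    by (intro UN_mono) auto
  moreover have "(\<Union>k\<le>?M. layer f U V k) \<subseteq> classes f U V"
    using layer_subset_classes[of f U V] by blast
  ultimately show ?thesis
    by blast
qed

locale acc_transitive_on_crit =
  fixes f :: "complex \<Rightarrow> complex" and U V :: "complex set"
  assumes acc_trans_crit:
    "\<And>x y z. y \<in> crit f U \<Longrightarrow> acc f U V x y \<Longrightarrow> acc f U V y z \<Longrightarrow> acc f U V x z"
begin

lemma crit_sim_trans:
  "b \<in> crit f U \<Longrightarrow> crit_sim f U V a b \<Longrightarrow> crit_sim f U V b c \<Longrightarrow> crit_sim f U V a c"
  unfolding crit_sim_def using acc_trans_crit[of b] by blast

lemma crit_sim_sym: "crit_sim f U V a b \<Longrightarrow> crit_sim f U V b a"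
  unfolding crit_sim_def by auto

lemma classesE:
  assumes "A \<in> classes f U V" "a \<in> A"
  obtains "a \<in> crit f U" "A = crit_class f U V a"
proof
  obtain c where c: "c \<in> crit f U" "A = crit_class f U V c"
    using assms(1) unfolding classes_def by blast
  with assms(2) show a: "a \<in> crit f U"
    unfolding crit_class_def by blast
  with c assms(2) show "A = crit_class f U V a"
    unfolding crit_class_def using crit_sim_trans crit_sim_sym by blast
qed

lemma crit_sim_if_same_class:
  assumes "A \<in> classes f U V" "a \<in> A" "a' \<in> A"
  shows "crit_sim f U V a a'"
  using classesE[OF assms(1,2)] assms(3) unfolding crit_class_def by blast

lemma cls_acc_iff_acc:
  assumes A: "A \<in> classes f U V" "a \<in> A" and B: "B \<in> classes f U V" "b \<in> B"
  shows "cls_acc f U V A B \<longleftrightarrow> acc f U V a b"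
proof
  assume "cls_acc f U V A B"
  then obtain a0 b0 where ab0: "a0 \<in> A" "b0 \<in> B" "acc f U V a0 b0"
    unfolding cls_acc_def by blast
  have "a0 \<in> crit f U" "b0 \<in> crit f U"
    using classesE A B ab0 by metis+
  moreover have "crit_sim f U V a a0" "crit_sim f U V b0 b"
    using crit_sim_if_same_class A B ab0 by blast+
  ultimately show "acc f U V a b"
    using ab0(3) acc_trans_crit[of a0 a b0] acc_trans_crit[of b0 a b] unfolding crit_sim_def by blast
qed (use A B in \<open>auto simp: cls_acc_def\<close>)

lemma cls_acc_trans:
  assumes "A \<in> classes f U V" "B \<in> classes f U V" "C \<in> classes f U V"
    and "cls_acc f U V A B" "cls_acc f U V B C"
  shows "cls_acc f U V A C"
proof -
  obtain a b where ab: "a \<in> A" "b \<in> B" "acc f U V a b"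
    using assms(4) unfolding cls_acc_def by blast
  obtain c where c: "c \<in> C" "acc f U V b c"
    using assms(5) cls_acc_iff_acc[OF assms(2) ab(2) assms(3)] unfolding cls_acc_def by blast
  have "b \<in> crit f U"
    using classesE[OF assms(2) ab(2)] by blast
  with ab c show ?thesis
    unfolding cls_acc_def using acc_trans_crit by blast
qed

lemma cls_acc_antisym:
  assumes A: "A \<in> classes f U V" and B: "B \<in> classes f U V"
    and "cls_acc f U V A B" "cls_acc f U V B A"
  shows "A = B"
proof -
  obtain a b where ab: "a \<in> A" "b \<in> B" "acc f U V a b"
    using assms(3) unfolding cls_acc_def by blast
  have "acc f U V b a"
    using assms(4) cls_acc_iff_acc[OF B ab(2) A ab(1)] by blast
  with ab have "b \<in> A"
    using classesE[OF A ab(1)] classesE[OF B ab(2)] unfolding crit_class_def crit_sim_def by blast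
  then show ?thesis
    using classesE[OF A] classesE[OF B ab(2)] by metis
qed

end

lemma continuous_on_funpow:
  assumes "continuous_on U f"
  shows "continuous_on {z. \<forall>i<m. (f ^^ i) z \<in> U} (f ^^ m)"
proof (induction m)
  case (Suc m)
  have "continuous_on {z. \<forall>i<Suc m. (f ^^ i) z \<in> U} (f ^^ m)"
    by (rule continuous_on_subset[OF Suc.IH]) auto
  then have "continuous_on {z. \<forall>i<Suc m. (f ^^ i) z \<in> U} (\<lambda>z. f ((f ^^ m) z))"
    by (rule continuous_on_compose2[OF assms]) auto
  then show ?case
    by (simp add: comp_def)
qed (simp add: continuous_on_id)

lemma funpow_in_depth_set:
  assumes "z \<in> depth_set f U V (n + i)"
  shows "(f ^^ i) z \<in> depth_set f U V n"
proof -
  have "(f ^^ k) ((f ^^ i) z) = (f ^^ (k + i)) z" for k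
    by (simp add: funpow_add)
  with assms show ?thesis
    unfolding depth_set_def by (simp add: add.commute)
qed

lemma funpow_image_piece:
  assumes "continuous_on U f" and y: "y \<in> depth_set f U V (n + i)"
  shows "(f ^^ i) ` piece f U V (n + i) y \<subseteq> piece f U V n ((f ^^ i) y)"
proof -
  let ?P = "piece f U V (n + i) y"
  have sub: "?P \<subseteq> {z. \<forall>j<i. (f ^^ j) z \<in> U}"
    unfolding piece_def depth_set_def using connected_component_subset by fastforce
  have "connected ?P"
    by (simp add: piece_def)
  then have conn: "connected ((f ^^ i) ` ?P)"
    by (rule connected_continuous_image[OF continuous_on_subset[OF continuous_on_funpow[OF assms(1)] sub]])
  have mem: "(f ^^ i) y \<in> (f ^^ i) ` ?P"
    using y by (simp add: piece_def connected_component_refl)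
  have "(f ^^ i) ` ?P \<subseteq> depth_set f U V n"
    using funpow_in_depth_set connected_component_subset unfolding piece_def by blast
  with mem conn show ?thesis
    unfolding piece_def by (rule connected_component_maximal)
qed

lemma acc_trans:
  assumes "continuous_on U f" "U \<subseteq> V" "y \<in> filled_set f U"
    and xy: "acc f U V x y" and yz: "acc f U V y z"
  shows "acc f U V x z"
  unfolding acc_def
proof
  fix n
  obtain i where i: "i \<ge> 1" "(f ^^ i) y \<in> piece f U V n z"
    using yz unfolding acc_def by blast
  obtain j where j: "j \<ge> 1" "(f ^^ j) x \<in> piece f U V (n + i) y"
    using xy unfolding acc_def by blast
  have "y \<in> depth_set f U V (n + i)"
    using assms(2,3) unfolding filled_set_def depth_set_def by blast
  then have "(f ^^ (i + j)) x \<in> piece f U V n ((f ^^ i) y)"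
    using funpow_image_piece[OF assms(1)] j(2) by (fastforce simp: funpow_add)
  also have "piece f U V n ((f ^^ i) y) = piece f U V n z"
    using i(2) unfolding piece_def by (rule connected_component_eq)
  finally show "\<exists>j\<ge>1. (f ^^ j) x \<in> piece f U V n z"
    using i(1) by (intro exI[of _ "i + j"]) auto
qed

lemma jordan_domain_open_bounded: "jordan_domain D \<Longrightarrow> open D \<and> bounded D"
  unfolding jordan_domain_def
  by (metis bounded_inside compact_imp_bounded compact_imp_closed compact_path_image
      open_inside simple_path_imp_path)

lemma setup_mapD:
  assumes "setup_map f \<U> \<V>"
  shows setup_map_open_bounded: "\<And>D. D \<in> \<U> \<Longrightarrow> open D \<and> bounded D"
    and setup_map_closure_disjoint:
      "\<And>D D'. D \<in> \<U> \<Longrightarrow> D' \<in> \<U> \<Longrightarrow> D \<noteq> D' \<Longrightarrow> closure D \<inter> closure D' = {}"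
    and setup_map_compact_closure: "compact (closure (\<Union>\<U>))"
    and setup_map_subset: "closure (\<Union>\<U>) \<subseteq> \<Union>\<V>"
    and setup_map_holomorphic: "f holomorphic_on \<Union>\<U>"
    and setup_map_image: "f ` \<Union>\<U> \<subseteq> \<Union>\<V>"
    and setup_map_proper: "\<And>K. K \<subseteq> \<Union>\<V> \<Longrightarrow> compact K \<Longrightarrow> compact {z \<in> \<Union>\<U>. f z \<in> K}"
    and setup_map_crit: "crit f (\<Union>\<U>) \<subseteq> filled_set f (\<Union>\<U>)"
  using assms unfolding setup_map_def by (simp_all add: jordan_domain_open_bounded)

lemma setup_map_frontier_disjoint:
  assumes sm: "setup_map f \<U> \<V>" and D: "D \<in> \<U>"
  shows "frontier D \<inter> \<Union>\<U> = {}"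
proof -
  have "q \<notin> D'" if "q \<in> frontier D" "D' \<in> \<U>" for q D'
  proof (cases "D' = D")
    case True
    with that setup_map_open_bounded[OF sm D] show ?thesis
      by (simp add: frontier_def interior_open)
  next
    case False
    with that show ?thesis
      using setup_map_closure_disjoint[OF sm D] closure_subset[of D']
      unfolding frontier_def by blast
  qed
  then show ?thesis
    by blast
qed

text \<open>A constant value \<open>w\<close> on a component \<open>S\<close> of a domain of \<open>\<U>\<close> would make the closure of
  \<open>S\<close> lie in the compact fibre over \<open>w\<close>, hence in \<open>\<Union>\<U>\<close>; but the frontier of \<open>S\<close> is
  nonempty and lies on the frontier of the domain.\<close>

lemma setup_map_not_constant_on_component:
  assumes sm: "setup_map f \<U> \<V>" and D: "D \<in> \<U>" "p \<in> D"
  shows "\<not> f constant_on connected_component_set D p"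
proof
  let ?S = "connected_component_set D p"
  assume "f constant_on ?S"
  then obtain w where w: "\<And>z. z \<in> ?S \<Longrightarrow> f z = w"
    unfolding constant_on_def by blast
  have S: "p \<in> ?S" "?S \<subseteq> \<Union>\<U>"
    using D connected_component_subset by (auto simp: connected_component_refl)
  then have "w \<in> \<Union>\<V>"
    using setup_map_image[OF sm] w[of p] by blast
  then have "closed {z \<in> \<Union>\<U>. f z \<in> {w}}"
    by (intro compact_imp_closed setup_map_proper[OF sm]) auto
  moreover have "?S \<subseteq> {z \<in> \<Union>\<U>. f z \<in> {w}}"
    using w S by auto
  ultimately have "closure ?S \<subseteq> {z \<in> \<Union>\<U>. f z \<in> {w}}"
    by (simp add: closure_minimal)
  moreover have "frontier ?S \<subseteq> closure ?S"
    unfolding frontier_def by blast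
  moreover have "frontier ?S \<subseteq> frontier D"
    by (rule frontier_of_connected_component_subset)
  ultimately have "frontier ?S = {}"
    using setup_map_frontier_disjoint[OF sm D(1)] by blast
  have "bounded ?S"
    using setup_map_open_bounded[OF sm D(1)] by (intro bounded_subset[OF _ connected_component_subset]) auto
  then have "?S \<noteq> UNIV"
    by (metis not_bounded_UNIV)
  moreover have "?S \<noteq> {}"
    using S(1) by blast
  ultimately have "frontier ?S \<noteq> {}"
    by (intro frontier_not_empty)
  with \<open>frontier ?S = {}\<close> show False
    by contradiction
qed

text \<open>Critical points lie in the filled set, hence in the compact set \<open>f\<^sup>-\<^sup>1(closure U)\<close>; an
  accumulation point of them would make \<open>f'\<close> vanish, and \<open>f\<close> constant, on a component of a
  domain of \<open>\<U>\<close>.\<close>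

lemma setup_map_finite_crit:
  assumes sm: "setup_map f \<U> \<V>"
  shows "finite (crit f (\<Union>\<U>))"
proof (rule ccontr)
  let ?U = "\<Union>\<U>"
  assume inf: "infinite (crit f ?U)"
  let ?C = "{z \<in> ?U. f z \<in> closure ?U}"
  have "compact ?C"
    using setup_map_proper[OF sm setup_map_subset[OF sm] setup_map_compact_closure[OF sm]] .
  moreover have "crit f ?U \<subseteq> ?C"
  proof
    fix z assume "z \<in> crit f ?U"
    then have "z \<in> ?U" "(f ^^ 1) z \<in> ?U"
      using setup_map_crit[OF sm] unfolding filled_set_def by blast+
    then show "z \<in> ?C"
      using closure_subset[of ?U] by auto
  qed
  ultimately obtain p where "p \<in> ?C" and p: "p islimpt crit f ?U"
    using inf unfolding compact_eq_Bolzano_Weierstrass by blast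
  then obtain D where D: "D \<in> \<U>" "p \<in> D"
    by blast
  let ?S = "connected_component_set D p"
  have S: "open ?S" "connected ?S" "p \<in> ?S" "?S \<subseteq> ?U"
    using D setup_map_open_bounded[OF sm D(1)] connected_component_subset
    by (auto simp: open_connected_component connected_component_refl)
  then have holS: "f holomorphic_on ?S"
    using setup_map_holomorphic[OF sm] holomorphic_on_subset by blast
  have deriv0: "deriv f z = 0" if "z \<in> ?S" for z
  proof (rule analytic_continuation[of "deriv f" ?S "crit f ?U \<inter> ?S" p])
    show "p islimpt crit f ?U \<inter> ?S"
      by (rule islimpt_Int_eventually[OF p eventually_at_in_open'[OF S(1,3)]])
  qed (use S holS that in \<open>auto simp: holomorphic_deriv crit_def\<close>)
  have "f constant_on ?S"
  proof (rule has_field_derivative_0_imp_constant_on)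
    fix z assume "z \<in> ?S"
    then have "f field_differentiable at z"
      using holS S(1) holomorphic_on_imp_differentiable_at by blast
    then show "(f has_field_derivative 0) (at z)"
      using deriv0[OF \<open>z \<in> ?S\<close>] by (metis DERIV_deriv_iff_field_differentiable)
  qed (use S in auto)
  with setup_map_not_constant_on_component[OF sm D] show False
    by contradiction
qed

lemma setup_map_acc_transitive_on_crit:
  assumes sm: "setup_map f \<U> \<V>"
  shows "acc_transitive_on_crit f (\<Union>\<U>) (\<Union>\<V>)"
proof
  have "continuous_on (\<Union>\<U>) f"
    using setup_map_holomorphic[OF sm] by (rule holomorphic_on_imp_continuous_on)
  moreover have "\<Union>\<U> \<subseteq> \<Union>\<V>"
    using setup_map_subset[OF sm] closure_subset by blast
  ultimately show "acc f (\<Union>\<U>) (\<Union>\<V>) x z"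
    if "y \<in> crit f (\<Union>\<U>)" "acc f (\<Union>\<U>) (\<Union>\<V>) x y" "acc f (\<Union>\<U>) (\<Union>\<V>) y z" for x y z
    using that setup_map_crit[OF sm] acc_trans by blast
qed

theorem lemma7p1:
  fixes f :: "complex \<Rightarrow> complex" and \<U> \<V> :: "complex set set"
  assumes "setup_map f \<U> \<V>"
  defines "U \<equiv> \<Union>\<U>" and "V \<equiv> \<Union>\<V>"
  shows "(\<exists>M::nat. classes f U V = (\<Union>k\<le>M. layer f U V k) \<and> disjoint_family_on (layer f U V) {..M})
     \<and> (\<forall>k A B. A \<in> layer f U V k \<and> B \<in> layer f U V k \<and> A \<noteq> B \<longrightarrow>
                  \<not> cls_acc f U V A B \<and> \<not> cls_acc f U V B A)
     \<and> (\<forall>s t A B. s < t \<and> A \<in> layer f U V s \<and> B \<in> layer f U V t \<longrightarrow> \<not> cls_acc f U V A B)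
     \<and> (\<forall>k A. k \<ge> 1 \<and> A \<in> layer f U V k \<longrightarrow> (\<exists>B \<in> layer f U V (k - 1). cls_acc f U V A B))"
proof -
  interpret acc_transitive_on_crit f U V
    unfolding U_def V_def using assms(1) by (rule setup_map_acc_transitive_on_crit)
  have "finite (classes f U V)"
    unfolding classes_def U_def using setup_map_finite_crit[OF assms(1)] by simp
  then have exhaust: "classes f U V = (\<Union>k\<le>card (classes f U V). layer f U V k)"
    using cls_acc_trans cls_acc_antisym by (rule classes_eq_UN_layer)
  have previous: "\<exists>B \<in> layer f U V (k - 1). cls_acc f U V A B"
    if k: "k \<ge> 1" and A: "A \<in> layer f U V k" for k A
  proof -
    obtain j where "k = Suc j"
      using k by (cases k) auto
    with A show ?thesis
      using layer_Suc_cls_acc[of A f U V j] by (simp only: diff_Suc_1)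
  qed
  show ?thesis
    apply (intro conjI)
    subgoal using exhaust disjoint_family_on_layer by (intro exI[of _ "card (classes f U V)"] conjI)
    subgoal using layer_not_cls_acc by metis
    subgoal using layer_not_cls_acc_higher by metis
    subgoal using previous by metis
    done
qed

end
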